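(* Let $q\in\mathrm{prob}(\{0,1\}^2)$. Then $E_\le:=\{\chi^{(1)}_{1|1}:(\pi,\chi)\in\Theta_2,\ \mu(\pi,\chi)=q,\ \chi^{(1)}_{0|0}\le\chi^{(2)}_{0|0}\}\subseteq\left[0,\min\left\{\frac{q_{1+}}{q_{+1}},1\right\}\right]$, with the conventions $x/0:=\infty$ for $x>0$ and $\frac{q_{1+}}{q_{+1}}:=1$ in the case $q_{1+}=q_{+1}=0$ (equivalently $q_{00}=1$).
   Context: A subscript $+$ denotes summation over the replaced index: $q_{1+}=q_{10}+q_{11}$, $q_{+1}=q_{01}+q_{11}$. $\mathrm{prob}(\mathcal{X})$ is the set of probability densities on a finite set $\mathcal{X}$; $\mathrm{markov}(\mathcal{X},\mathcal{Y})$ the set of maps $(x,y)\mapsto p_{y|x}$ with $p_{\cdot|x}\in\mathrm{prob}(\mathcal{Y})$. $\Theta_2:=\mathrm{prob}(\{0,1\})\times\mathrm{markov}(\{0,1\},\{0,1\}^2)$, $\mu(\pi,\chi)_j:=\sum_{i=0}^1\pi_i\chi_{j|i}$ for $j\in\{0,1\}^2$, $\chi^{(1)}_{\iota|i}:=\chi_{\iota0|i}+\chi_{\iota1|i}$, $\chi^{(2)}_{\iota|i}:=\chi_{0\iota|i}+\chi_{1\iota|i}$. *)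

theory Defs
  imports Complex_Main
begin

definition prob_on :: "'a set \<Rightarrow> ('a \<Rightarrow> real) \<Rightarrow> bool" where
  "prob_on X p \<longleftrightarrow> (\<forall>x\<in>X. 0 \<le> p x) \<and> sum p X = 1"

text \<open>Markov kernels: chi y x stands for chi_{y|x}.\<close>
definition markov_on :: "'x set \<Rightarrow> 'y set \<Rightarrow> ('y \<Rightarrow> 'x \<Rightarrow> real) \<Rightarrow> bool" where
  "markov_on X Y chi \<longleftrightarrow> (\<forall>x\<in>X. prob_on Y (\<lambda>y. chi y x))"

definition bits :: "nat set" where "bits = {0, 1}"

definition Theta2 :: "(nat \<Rightarrow> real) \<Rightarrow> (nat \<times> nat \<Rightarrow> nat \<Rightarrow> real) \<Rightarrow> bool" where
  "Theta2 p chi \<longleftrightarrow> prob_on bits p \<and> markov_on bits (bits \<times> bits) chi"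

definition mu :: "(nat \<Rightarrow> real) \<Rightarrow> (nat \<times> nat \<Rightarrow> nat \<Rightarrow> real) \<Rightarrow> nat \<times> nat \<Rightarrow> real" where
  "mu p chi j = (\<Sum>i\<in>bits. p i * chi j i)"

definition chi1 :: "(nat \<times> nat \<Rightarrow> nat \<Rightarrow> real) \<Rightarrow> nat \<Rightarrow> nat \<Rightarrow> real" where
  "chi1 chi \<iota> i = chi (\<iota>, 0) i + chi (\<iota>, 1) i"

definition chi2 :: "(nat \<times> nat \<Rightarrow> nat \<Rightarrow> real) \<Rightarrow> nat \<Rightarrow> nat \<Rightarrow> real" where
  "chi2 chi \<iota> i = chi (0, \<iota>) i + chi (1, \<iota>) i"

definition E_le :: "(nat \<times> nat \<Rightarrow> real) \<Rightarrow> real set" where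
  "E_le q = {chi1 chi 1 1 | p chi. Theta2 p chi \<and> (\<forall>j\<in>bits \<times> bits. mu p chi j = q j)
                              \<and> chi1 chi 0 0 \<le> chi2 chi 0 0}"

text \<open>min{q_{1+}/q_{+1}, 1} with x/0 = infinity for x>0 and 0/0 := 1 here;
  in both cases with q_{+1} = 0 the value is 1.\<close>
definition upper_bound :: "(nat \<times> nat \<Rightarrow> real) \<Rightarrow> real" where
  "upper_bound q = (let a = q (1,0) + q (1,1); b = q (0,1) + q (1,1) in
                     if b = 0 then 1 else min (a / b) 1)"

end

theory Submission
  imports Defs
begin

text \<open>Both marginals of mu(pi, chi) are pi-mixtures of the marginals of chi:
  q_{1+} = pi_0 chi1_{1|0} + pi_1 chi1_{1|1} and q_{+1} = pi_0 chi2_{1|0} + pi_1 chi2_{1|1}.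
  The constraint chi1_{0|0} <= chi2_{0|0} amounts to chi_{01|0} <= chi_{10|0}, i.e.
  chi2_{1|0} <= chi1_{1|0}. So for x = chi1_{1|1} in [0,1], bounding x by 1 in the first
  summand and chi2_{1|1} by 1 in the second gives x q_{+1} <= q_{1+}.\<close>

lemma sum_bits: "sum f bits = f 0 + f (1::nat)"
  by (simp add: bits_def)

lemma sum_bits_times_bits:
  "sum g (bits \<times> bits) = g (0,0) + g (0,1) + g (1,0) + g (1::nat, 1::nat)"
  by (simp add: bits_def add.assoc)

lemma mu_first_marginal:
  "mu p chi (\<iota>, 0) + mu p chi (\<iota>, 1) = (\<Sum>i\<in>bits. p i * chi1 chi \<iota> i)"
  by (simp add: mu_def chi1_def sum_bits algebra_simps)

lemma mu_second_marginal:
  "mu p chi (0, \<iota>) + mu p chi (1, \<iota>) = (\<Sum>i\<in>bits. p i * chi2 chi \<iota> i)"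
  by (simp add: mu_def chi2_def sum_bits algebra_simps)

lemma chi1_le_chi2_zero_iff:
  "chi1 chi 0 i \<le> chi2 chi 0 i \<longleftrightarrow> chi2 chi 1 i \<le> chi1 chi 1 i"
  by (simp add: chi1_def chi2_def)

lemma markov_on_bits_marginals:
  assumes "markov_on bits (bits \<times> bits) chi" and "i \<in> bits" and "\<iota> \<in> bits"
  shows "0 \<le> chi1 chi \<iota> i" "chi1 chi \<iota> i \<le> 1" "0 \<le> chi2 chi \<iota> i" "chi2 chi \<iota> i \<le> 1"
proof -
  have nonneg: "0 \<le> chi (a, b) i" if "a \<in> bits" "b \<in> bits" for a b
    using assms(1,2) that by (auto simp: markov_on_def prob_on_def)
  have "chi (0,0) i + chi (0,1) i + chi (1,0) i + chi (1,1) i = 1"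
    using assms(1,2) by (auto simp: markov_on_def prob_on_def sum_bits_times_bits)
  moreover note nonneg[of 0 0] nonneg[of 0 1] nonneg[of 1 0] nonneg[of 1 1]
  ultimately show "0 \<le> chi1 chi \<iota> i" "chi1 chi \<iota> i \<le> 1" "0 \<le> chi2 chi \<iota> i" "chi2 chi \<iota> i \<le> 1"
    using assms(3) by (auto simp: chi1_def chi2_def bits_def)
qed

lemma mixture_scaled_le:
  fixes p0 p1 a0 b0 a1 x :: real
  assumes "0 \<le> p0" "0 \<le> p1" "0 \<le> a0" "a0 \<le> b0" "0 \<le> a1" "a1 \<le> 1" "0 \<le> x" "x \<le> 1"
  shows "x * (p0 * a0 + p1 * a1) \<le> p0 * b0 + p1 * x"
proof -
  have "x * (p0 * a0) \<le> p0 * b0"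
    using assms by (metis mult.left_commute mult_left_le_one_le mult_left_mono mult_nonneg_nonneg order.trans)
  moreover have "x * (p1 * a1) \<le> p1 * x"
    using assms by (simp add: mult_left_le mult.left_commute mult_left_mono)
  ultimately show ?thesis
    by (simp add: distrib_left)
qed

lemma le_upper_bound:
  assumes "x \<le> 1" and "0 \<le> q (0,1) + q (1,1)"
    and "x * (q (0,1) + q (1,1)) \<le> q (1,0) + q (1,1)"
  shows "x \<le> upper_bound q"
  using assms by (auto simp: upper_bound_def Let_def pos_le_divide_eq)

theorem lemma11:
  fixes q :: "nat \<times> nat \<Rightarrow> real"
  assumes "prob_on (bits \<times> bits) q"
  shows "E_le q \<subseteq> {0 .. upper_bound q}"
proof
  fix x assume "x \<in> E_le q"
  then obtain p chi where x: "x = chi1 chi 1 1" and "Theta2 p chi"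
    and mu_q: "\<forall>j\<in>bits \<times> bits. mu p chi j = q j" and "chi1 chi 0 0 \<le> chi2 chi 0 0"
    unfolding E_le_def by blast
  then have p: "prob_on bits p" and chi: "markov_on bits (bits \<times> bits) chi"
    and constraint: "chi2 chi 1 0 \<le> chi1 chi 1 0"
    by (simp_all add: Theta2_def chi1_le_chi2_zero_iff)
  have in_bits: "(0::nat) \<in> bits" "(1::nat) \<in> bits" by (simp_all add: bits_def)
  have "0 \<le> p 0" "0 \<le> p 1" using p in_bits by (auto simp: prob_on_def)
  moreover note markov_on_bits_marginals[OF chi in_bits(1) in_bits(2)]
    markov_on_bits_marginals[OF chi in_bits(2) in_bits(2)]
  ultimately have "x * (p 0 * chi2 chi 1 0 + p 1 * chi2 chi 1 1) \<le> p 0 * chi1 chi 1 0 + p 1 * x"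
    using constraint unfolding x by (intro mixture_scaled_le) auto
  moreover have "q (1,0) + q (1,1) = p 0 * chi1 chi 1 0 + p 1 * x"
    and "q (0,1) + q (1,1) = p 0 * chi2 chi 1 0 + p 1 * chi2 chi 1 1"
    using mu_q mu_first_marginal[of p chi 1] mu_second_marginal[of p chi 1]
    by (simp_all add: x sum_bits bits_def)
  moreover have "0 \<le> q (0,1) + q (1,1)" using assms in_bits by (auto simp: prob_on_def)
  ultimately show "x \<in> {0 .. upper_bound q}"
    using markov_on_bits_marginals[OF chi in_bits(2) in_bits(2)]
    by (auto simp: x intro: le_upper_bound)
qed

end
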